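(* Let $G$ be a finite digraph such that $\mathrm{Pol}(G)\models\Sigma_M$ and $\mathrm{Pol}(G)\models\Sigma_p$ for all primes $p$. Then $P_2\le G$.
   Context: A digraph is $(V,E)$ with $E\subseteq V^2$; $H^k$ is the digraph on $V^k$ with edges $((u_i),(v_i))$ whenever $(u_i,v_i)\in E$ for all $i$. A polymorphism of $H$ of arity $k$ is a homomorphism $H^k\to H$; $\mathrm{Pol}(H)$ is the set of all polymorphisms. $\mathrm{Pol}(H)\models\Sigma_n$ means there is an $n$-ary $f\in\mathrm{Pol}(H)$ with $f(x_1,x_2,\dots,x_n)=f(x_2,\dots,x_n,x_1)$ for all $x_i\in V$ (a cyclic polymorphism). $\mathrm{Pol}(H)\models\Sigma_M$ means there is a ternary $f\in\mathrm{Pol}(H)$ with $f(y,y,x)=f(x,x,x)=f(x,y,y)$ for all $x,y\in V$. A primitive positive formula is $\exists y_1,\dots,y_n(\psi_1\wedge\dots\wedge\psi_m)$ with each $\psi_i$ being $\bot$, $z_1=z_2$, or $E(z_1,z_2)$; a pp power of $H$ of dimension $d$ is the digraph on $V^d$ with edges $\{(u,v):\phi(u,v)\text{ holds in }H\}$ for a pp formula $\phi(x_1,\dots,x_d,y_1,\dots,y_d)$. $H\le G$ means $G$ is homomorphically equivalent (homomorphisms both ways) to a pp power of $H$. $P_2$ has vertices $\{0,1\}$ and the single edge $(0,1)$. *)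

theory Defs
  imports Main "HOL-Computational_Algebra.Primes"
begin

type_synonym 'a digraph = "'a set \<times> ('a \<times> 'a) set"

definition verts :: "'a digraph \<Rightarrow> 'a set" where "verts G = fst G"
definition edges :: "'a digraph \<Rightarrow> ('a \<times> 'a) set" where "edges G = snd G"

definition digraph :: "'a digraph \<Rightarrow> bool" where
  "digraph G \<longleftrightarrow> edges G \<subseteq> verts G \<times> verts G"

definition tuples :: "'a set \<Rightarrow> nat \<Rightarrow> 'a list set" where
  "tuples V k = {xs. length xs = k \<and> set xs \<subseteq> V}"

definition power_digraph :: "'a digraph \<Rightarrow> nat \<Rightarrow> 'a list digraph" where
  "power_digraph H k =
     (tuples (verts H) k,
      {(us, vs). us \<in> tuples (verts H) k \<and> vs \<in> tuples (verts H) k \<and>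
                 (\<forall>i<k. (us ! i, vs ! i) \<in> edges H)})"

definition hom :: "('a \<Rightarrow> 'b) \<Rightarrow> 'a digraph \<Rightarrow> 'b digraph \<Rightarrow> bool" where
  "hom h G H \<longleftrightarrow> (\<forall>x\<in>verts G. h x \<in> verts H) \<and>
                  (\<forall>(x, y)\<in>edges G. (h x, h y) \<in> edges H)"

definition hom_equiv :: "'a digraph \<Rightarrow> 'b digraph \<Rightarrow> bool" where
  "hom_equiv G H \<longleftrightarrow> (\<exists>h. hom h G H) \<and> (\<exists>g. hom g H G)"

definition polymorphism :: "'a digraph \<Rightarrow> nat \<Rightarrow> ('a list \<Rightarrow> 'a) \<Rightarrow> bool" where
  "polymorphism H k f \<longleftrightarrow> hom f (power_digraph H k) H"

text \<open>Pol(H) satisfies Sigma_n: an n-ary cyclic polymorphism.\<close>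
definition has_cyclic_pol :: "'a digraph \<Rightarrow> nat \<Rightarrow> bool" where
  "has_cyclic_pol H n \<longleftrightarrow> (\<exists>f. polymorphism H n f \<and>
      (\<forall>xs\<in>tuples (verts H) n. f xs = f (rotate1 xs)))"

definition has_SigmaM_pol :: "'a digraph \<Rightarrow> bool" where
  "has_SigmaM_pol H \<longleftrightarrow> (\<exists>f. polymorphism H 3 f \<and>
      (\<forall>x\<in>verts H. \<forall>y\<in>verts H. f [y, y, x] = f [x, x, x] \<and> f [x, x, x] = f [x, y, y]))"

text \<open>In a pp formula of dimension d, variables 0..<d are x_1..x_d, variables d..<2d are
  y_1..y_d and all other variables are existentially quantified.\<close>
datatype atom = Bot | Eq nat nat | Edge nat nat

fun atom_sat :: "'a digraph \<Rightarrow> (nat \<Rightarrow> 'a) \<Rightarrow> atom \<Rightarrow> bool" where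
  "atom_sat H a Bot = False"
| "atom_sat H a (Eq i j) = (a i = a j)"
| "atom_sat H a (Edge i j) = ((a i, a j) \<in> edges H)"

definition pp_holds :: "'a digraph \<Rightarrow> nat \<Rightarrow> atom list \<Rightarrow> 'a list \<Rightarrow> 'a list \<Rightarrow> bool" where
  "pp_holds H d phi us vs \<longleftrightarrow>
     (\<exists>a. (\<forall>i. a i \<in> verts H) \<and> (\<forall>i<d. a i = us ! i \<and> a (d + i) = vs ! i) \<and>
          (\<forall>psi\<in>set phi. atom_sat H a psi))"

definition pp_power :: "'a digraph \<Rightarrow> nat \<Rightarrow> atom list \<Rightarrow> 'a list digraph" where
  "pp_power H d phi =
     (tuples (verts H) d,
      {(us, vs). us \<in> tuples (verts H) d \<and> vs \<in> tuples (verts H) d \<and> pp_holds H d phi us vs})"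

definition pp_le :: "'a digraph \<Rightarrow> 'b digraph \<Rightarrow> bool" where
  "pp_le H G \<longleftrightarrow> (\<exists>d phi. hom_equiv G (pp_power H d phi))"

definition P2 :: "nat digraph" where
  "P2 = ({0, 1}, {(0, 1)})"

end

theory Submission
  imports Defs
begin

text \<open>
  If G has a loop, it is homomorphically equivalent to a one-point pp power of P2. Otherwise a
  cyclic polymorphism of prime arity p turns a closed walk of length p q into one of length q, so
  G has no closed walks at all and the lengths of its walks are bounded by some maximum n.

  The Sigma_M polymorphism f gives the map g x = f [x, x, x], which sends every k-step
  zigzag x \<rightarrow> z \<leftarrow> y \<rightarrow> w to a walk g x \<rightarrow> g w of length k. With it, every
  zigzag path can be shortened without decreasing its net length (forward minus backward steps),
  so net lengths are at most n. The largest net length of a zigzag path ending in v is then a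
  homomorphism from G to the directed path with n edges, and a longest walk maps that path back
  into G. Finally, the directed path is homomorphically equivalent to an n-dimensional pp power
  of P2.
\<close>


section \<open>Homomorphisms and polymorphisms\<close>

lemma hom_comp: "hom h G H \<Longrightarrow> hom h' H K \<Longrightarrow> hom (h' \<circ> h) G K"
  unfolding hom_def by fastforce

lemma hom_equiv_trans: "hom_equiv G H \<Longrightarrow> hom_equiv H K \<Longrightarrow> hom_equiv G K"
  unfolding hom_equiv_def by (meson hom_comp)

lemma relpow_in_verts:
  assumes "digraph G" "(x, y) \<in> edges G ^^ k" "0 < k"
  shows "x \<in> verts G" "y \<in> verts G"
proof -
  obtain k' where "k = Suc k'" using assms(3) by (cases k) auto
  then show "x \<in> verts G" "y \<in> verts G"
    using assms(1,2) unfolding digraph_def by (blast elim: relpow_Suc_E relpow_Suc_E2)+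
qed

lemma edges_power_digraph:
  "(us, vs) \<in> edges (power_digraph H k) \<longleftrightarrow>
     us \<in> tuples (verts H) k \<and> vs \<in> tuples (verts H) k \<and> (\<forall>i<k. (us ! i, vs ! i) \<in> edges H)"
  by (simp add: power_digraph_def edges_def)

lemma tuples_nth: "xs \<in> tuples V n \<Longrightarrow> i < n \<Longrightarrow> xs ! i \<in> V"
  by (auto simp: tuples_def)

lemma verts_P2 [simp]: "verts P2 = {0, 1}"
  and edges_P2 [simp]: "edges P2 = {(0, 1)}"
  by (simp_all add: P2_def verts_def edges_def)

lemma verts_pp_power [simp]: "verts (pp_power H d phi) = tuples (verts H) d"
  and edges_pp_power [simp]: "edges (pp_power H d phi) =
    {(us, vs). us \<in> tuples (verts H) d \<and> vs \<in> tuples (verts H) d \<and> pp_holds H d phi us vs}"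
  by (simp_all add: pp_power_def verts_def edges_def)

lemma polymorphism_edge:
  assumes "polymorphism H k f" "us \<in> tuples (verts H) k" "vs \<in> tuples (verts H) k"
    and "\<And>i. i < k \<Longrightarrow> (us ! i, vs ! i) \<in> edges H"
  shows "(f us, f vs) \<in> edges H"
proof -
  have "(us, vs) \<in> edges (power_digraph H k)"
    using assms(2-4) by (simp add: edges_power_digraph)
  then show ?thesis using assms(1) unfolding polymorphism_def hom_def by blast
qed

lemma polymorphism_relpow:
  assumes H: "digraph H" and f: "polymorphism H m f"
  shows "length xs = m \<Longrightarrow> length ys = m \<Longrightarrow>
    (\<And>i. i < m \<Longrightarrow> (xs ! i, ys ! i) \<in> edges H ^^ k) \<Longrightarrow> (f xs, f ys) \<in> edges H ^^ k"
proof (induction k arbitrary: ys)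
  case 0
  then have "xs = ys" by (simp add: nth_equalityI)
  then show ?case by simp
next
  case (Suc k)
  have "\<exists>z. (xs ! i, z) \<in> edges H ^^ k \<and> (z, ys ! i) \<in> edges H" if "i < m" for i
    using Suc.prems(3)[OF that] by (meson relpow_Suc_E)
  then obtain z
    where z: "\<And>i. i < m \<Longrightarrow> (xs ! i, z i) \<in> edges H ^^ k \<and> (z i, ys ! i) \<in> edges H"
    by metis
  define zs where "zs = map z [0..<m]"
  have "(f xs, f zs) \<in> edges H ^^ k"
    using Suc.IH Suc.prems z by (simp add: zs_def)
  moreover have "(f zs, f ys) \<in> edges H"
  proof (rule polymorphism_edge[OF f])
    show "zs \<in> tuples (verts H) m" "ys \<in> tuples (verts H) m"
      using z H Suc.prems(2) by (fastforce simp: zs_def tuples_def digraph_def in_set_conv_nth)+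
  qed (use z in \<open>simp add: zs_def\<close>)
  ultimately show ?case by (rule relpow_Suc_I)
qed

section \<open>Closed walks and cyclic polymorphisms\<close>

lemma pp_le_of_loop:
  assumes H: "verts H \<noteq> {}" and G: "digraph G" and loop: "(x, x) \<in> edges G"
  shows "pp_le H G"
proof -
  have "pp_holds H 0 [] [] []"
    using H unfolding pp_holds_def by auto
  then have "hom (\<lambda>_. []) G (pp_power H 0 [])"
    unfolding hom_def by (simp add: tuples_def)
  moreover have "hom (\<lambda>_. x) (pp_power H 0 []) G"
    using G loop unfolding hom_def digraph_def by auto
  ultimately show ?thesis
    unfolding pp_le_def hom_equiv_def by blast
qed

lemma closed_walk_periodic:
  assumes "(x, x) \<in> E ^^ k" "0 < k"
  obtains W where "W 0 = x" "\<And>i. (W i, W (Suc i)) \<in> E" "\<And>i. W (i + k) = W i"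
proof -
  obtain w where w: "w 0 = x" "w k = x" "\<And>i. i < k \<Longrightarrow> (w i, w (Suc i)) \<in> E"
    using assms(1) unfolding relpow_fun_conv by blast
  have "(w (i mod k), w (Suc i mod k)) \<in> E" for i
    using w(3)[of "i mod k"] assms(2) w(1,2) by (auto simp: mod_Suc)
  then show thesis
    using w(1) by (intro that[of "\<lambda>i. w (i mod k)"]) simp_all
qed

lemma cyclic_pol_closed_walk_quotient:
  assumes H: "digraph H" and cyclic: "has_cyclic_pol H p" and p: "0 < p"
    and walk: "(x, x) \<in> edges H ^^ (p * q)"
  shows "\<exists>y. (y, y) \<in> edges H ^^ q"
proof (cases "q = 0")
  case False
  obtain f where f: "polymorphism H p f"
    and rotate: "\<And>xs. xs \<in> tuples (verts H) p \<Longrightarrow> f xs = f (rotate1 xs)"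
    using cyclic unfolding has_cyclic_pol_def by blast
  obtain W where W_edge: "\<And>i. (W i, W (Suc i)) \<in> edges H"
    and W_period: "\<And>i. W (i + p * q) = W i"
    using closed_walk_periodic[OF walk] p False by auto
  \<comment> \<open>Rotating T i gives T (i + q), so the cyclic polymorphism turns f \<circ> T into a walk of period q.\<close>
  define T where "T i = map (\<lambda>j. W (i + j * q)) [0..<p]" for i
  have T_tuple: "T i \<in> tuples (verts H) p" for i
    using W_edge H unfolding T_def tuples_def digraph_def by auto
  have T_edge: "(f (T i), f (T (Suc i))) \<in> edges H" for i
    using W_edge by (intro polymorphism_edge[OF f T_tuple T_tuple]) (simp add: T_def)
  have "rotate1 (T i) = T (i + q)" for i
  proof (rule nth_equalityI)
    fix j assume "j < length (rotate1 (T i))"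
    then have j: "j < p" by (simp add: T_def)
    show "rotate1 (T i) ! j = T (i + q) ! j"
    proof (cases "Suc j < p")
      case False
      then have "Suc j = p" using j by simp
      then have "rotate1 (T i) ! j = W i" "T (i + q) ! j = W (i + p * q)"
        using j by (auto simp: nth_rotate1 T_def algebra_simps)
      then show ?thesis using W_period by simp
    qed (simp add: nth_rotate1 T_def j algebra_simps)
  qed (simp add: T_def)
  then have "f (T q) = f (T 0)"
    using rotate[OF T_tuple] by (metis add_0)
  then have "(f (T 0), f (T 0)) \<in> edges H ^^ q"
    unfolding relpow_fun_conv using T_edge by (intro exI[of _ "f \<circ> T"]) simp
  then show ?thesis ..
qed simp

lemma loop_of_closed_walk:
  assumes H: "digraph H" and cyclic: "\<And>p. prime p \<Longrightarrow> has_cyclic_pol H p"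
  shows "(x, x) \<in> edges H ^^ k \<Longrightarrow> 0 < k \<Longrightarrow> \<exists>y. (y, y) \<in> edges H"
proof (induction k arbitrary: x rule: less_induct)
  case (less k)
  show ?case
  proof (cases "k = 1")
    case True
    with less.prems show ?thesis by auto
  next
    case False
    then obtain p where p: "prime p" "p dvd k" using prime_factor_nat by blast
    then obtain q where k: "k = p * q" by blast
    then have "0 < q" "q < k"
      using less.prems(2) prime_gt_1_nat[OF p(1)] by auto
    moreover obtain y where "(y, y) \<in> edges H ^^ q"
      using cyclic_pol_closed_walk_quotient[OF H cyclic[OF p(1)]] prime_gt_0_nat[OF p(1)]
        less.prems(1) k by blast
    ultimately show ?thesis using less.IH by blast
  qed
qed

lemma walk_length_less_card:
  assumes G: "digraph G" "finite (verts G)"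
    and acyclic: "\<And>x k. (x, x) \<in> edges G ^^ k \<Longrightarrow> k = 0"
    and x: "x \<in> verts G" and walk: "(x, y) \<in> edges G ^^ k"
  shows "k < card (verts G)"
proof -
  obtain w where w: "w 0 = x" "\<And>i. i < k \<Longrightarrow> (w i, w (Suc i)) \<in> edges G"
    using walk unfolding relpow_fun_conv by blast
  have "w ` {0..k} \<subseteq> verts G"
  proof (intro image_subsetI)
    fix i assume i: "i \<in> {0..k}"
    show "w i \<in> verts G"
    proof (cases i)
      case (Suc j)
      then show ?thesis using w(2)[of j] i G(1) by (auto simp: digraph_def)
    qed (use w(1) x in simp)
  qed
  moreover have "inj_on w {0..k}"
  proof (rule linorder_inj_onI')
    fix i j assume "i \<in> {0..k}" "j \<in> {0..k}" "i < j"
    then have "(w i, w j) \<in> edges G ^^ (j - i)"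
      unfolding relpow_fun_conv using w(2) by (intro exI[of _ "\<lambda>t. w (i + t)"]) auto
    with \<open>i < j\<close> show "w i \<noteq> w j" using acyclic by force
  qed
  ultimately have "card {0..k} \<le> card (verts G)"
    using G(2) by (intro card_inj_on_le)
  then show ?thesis by simp
qed

lemma longest_walk:
  assumes G: "digraph G" "finite (verts G)" "verts G \<noteq> {}"
    and acyclic: "\<And>x k. (x, x) \<in> edges G ^^ k \<Longrightarrow> k = 0"
  obtains x y n
  where "x \<in> verts G" "(x, y) \<in> edges G ^^ n" "\<And>u v k. (u, v) \<in> edges G ^^ k \<Longrightarrow> k \<le> n"
proof -
  define lengths where "lengths = {k. \<exists>x\<in>verts G. \<exists>y. (x, y) \<in> edges G ^^ k}"
  have "k < card (verts G)" if "x \<in> verts G" "(x, y) \<in> edges G ^^ k" for x y k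
    using G(1,2) acyclic that by (rule walk_length_less_card)
  then have "lengths \<subseteq> {..<card (verts G)}"
    unfolding lengths_def by blast
  then have finite: "finite lengths" by (rule finite_subset) simp
  have "0 \<in> lengths" unfolding lengths_def using G(3) by auto
  then have "Max lengths \<in> lengths" using finite by (intro Max_in) auto
  moreover have "k \<le> Max lengths" if "(u, v) \<in> edges G ^^ k" for u v k
  proof (cases "k = 0")
    case False
    then have "k \<in> lengths" unfolding lengths_def using relpow_in_verts[OF G(1) that] that by blast
    then show ?thesis using finite by simp
  qed simp
  ultimately show thesis unfolding lengths_def using that by blast
qed

section \<open>Zigzag paths and the net length bound\<close>

locale rectangular_map =
  fixes E :: "('a \<times> 'a) set" and g :: "'a \<Rightarrow> 'a"
  assumes rectangular:
    "(x, z) \<in> E ^^ k \<Longrightarrow> (y, z) \<in> E ^^ k \<Longrightarrow> (y, w) \<in> E ^^ k \<Longrightarrow> (g x, g w) \<in> E ^^ k"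

lemma SigmaM_pol_rectangular_map:
  assumes G: "digraph G" and "has_SigmaM_pol G"
  shows "\<exists>g. rectangular_map (edges G) g"
proof -
  obtain f where f: "polymorphism G 3 f"
    and SigmaM: "\<And>x y. x \<in> verts G \<Longrightarrow> y \<in> verts G \<Longrightarrow>
      f [y, y, x] = f [x, x, x] \<and> f [x, x, x] = f [x, y, y]"
    using assms(2) unfolding has_SigmaM_pol_def by blast
  have "(f [x, x, x], f [w, w, w]) \<in> edges G ^^ k"
    if xz: "(x, z) \<in> edges G ^^ k" and yz: "(y, z) \<in> edges G ^^ k" and yw: "(y, w) \<in> edges G ^^ k"
    for x y z w k
  proof (cases "k = 0")
    case True
    then show ?thesis using xz yz yw by simp
  next
    case False
    then have V: "x \<in> verts G" "y \<in> verts G" "z \<in> verts G" "w \<in> verts G"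
      using relpow_in_verts[OF G] xz yz yw by blast+
    have "(f [x, y, y], f [z, z, w]) \<in> edges G ^^ k"
    proof (rule polymorphism_relpow[OF G f])
      fix i :: nat assume "i < 3"
      then consider "i = 0" | "i = 1" | "i = 2" by linarith
      then show "([x, y, y] ! i, [z, z, w] ! i) \<in> edges G ^^ k"
        by cases (use xz yz yw in simp_all)
    qed simp_all
    then show ?thesis using SigmaM V by metis
  qed
  then show ?thesis by (auto intro!: exI[of _ "\<lambda>x. f [x, x, x]"] rectangular_map.intro)
qed

fun segment :: "('a \<times> 'a) set \<Rightarrow> bool \<times> nat \<Rightarrow> ('a \<times> 'a) set" where
  "segment E (True, k) = E ^^ k"
| "segment E (False, k) = (E ^^ k)\<inverse>"

definition zigzag :: "('a \<times> 'a) set \<Rightarrow> (bool \<times> nat) list \<Rightarrow> ('a \<times> 'a) set" where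
  "zigzag E S = foldr (\<lambda>s R. segment E s O R) S Id"

definition net_length :: "(bool \<times> nat) list \<Rightarrow> int" where
  "net_length S = (\<Sum>(d, k)\<leftarrow>S. if d then int k else - int k)"

lemma zigzag_Nil [simp]: "zigzag E [] = Id"
  and zigzag_Cons [simp]: "zigzag E (s # S) = segment E s O zigzag E S"
  by (simp_all add: zigzag_def)

lemma zigzag_append [simp]: "zigzag E (A @ B) = zigzag E A O zigzag E B"
  by (induction A) (simp_all add: O_assoc)

lemma segment_add: "segment E (d, a) O segment E (d, b) = segment E (d, a + b)"
  by (cases d) (simp_all add: relpow_add[symmetric] converse_relcomp[symmetric] add.commute)

lemma segment_list_cases:
  fixes S :: "(bool \<times> nat) list"
  assumes "2 \<le> length S"
  obtains (merge) A d a b C where "S = A @ [(d, a), (d, b)] @ C"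
  | (drop_head) a C where "S = (False, a) # C"
  | (drop_last) A a where "S = A @ [(False, a)]"
  | (drop_head2) a b C where "S = (True, a) # (False, b) # C" "a \<le> b"
  | (drop_last2) A a b where "S = A @ [(False, b), (True, a)]" "a \<le> b"
  | (valley) A d a b c C where "S = A @ [(d, a), (\<not> d, b), (d, c)] @ C" "b \<le> a" "b \<le> c"
proof -
  \<comment> \<open>Look at a segment of minimal length and at its neighbours.\<close>
  have "snd ` set S \<noteq> {}" using assms by auto
  then obtain s where "s \<in> set S" "snd s = Min (snd ` set S)"
    by (metis Min_in finite_set finite_imageI imageE)
  then have s: "s \<in> set S" "\<And>t. t \<in> set S \<Longrightarrow> snd s \<le> snd t"
    by simp_all
  obtain A C where S: "S = A @ s # C" using split_list[OF s(1)] by blast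
  obtain d b where db: "s = (d, b)" by (cases s)
  show thesis
  proof (cases A rule: rev_cases)
    case Nil
    then obtain d' c C' where "C = (d', c) # C'" using assms S by (cases C) auto
    with S Nil db s(2)[of "(d', c)"] show thesis
      using merge[of "[]"] drop_head drop_head2 by (cases d; cases d') auto
  next
    case (snoc A' a')
    obtain d' a where a': "a' = (d', a)" by (cases a')
    show thesis
    proof (cases C rule: list.exhaust)
      case Nil
      with S snoc a' db s(2)[of a'] show thesis
        using merge[of A'] drop_last drop_last2 by (cases d; cases d') auto
    next
      case (Cons c' C')
      obtain d'' c where c': "c' = (d'', c)" by (cases c')
      show thesis
      proof (cases "d' = d \<or> d'' = d")
        case True
        with S snoc Cons a' c' db show thesis
          using merge[of A'] merge[of "A' @ [(d', a)]"] by auto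
      next
        case False
        with S snoc Cons a' c' db s(2)[of a'] s(2)[of c'] show thesis
          using valley[of A' "\<not> d" a b c C'] by auto
      qed
    qed
  qed
qed

context rectangular_map
begin

lemma relpow_preserved: "(x, y) \<in> E ^^ k \<Longrightarrow> (g x, g y) \<in> E ^^ k"
  using rectangular by blast

lemma zigzag_preserved: "(x, z) \<in> zigzag E S \<Longrightarrow> (g x, g z) \<in> zigzag E S"
proof (induction S arbitrary: x)
  case (Cons s S)
  obtain d k where s: "s = (d, k)" by (cases s)
  from Cons show ?case unfolding s by (cases d) (auto intro: relpow_preserved)
qed simp

lemma zigzag_valley:
  assumes "(x, z) \<in> zigzag E [(d, a), (\<not> d, b), (d, c)]" "b \<le> a" "b \<le> c"
  shows "(g x, g z) \<in> zigzag E [(d, a + c - b)]"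
  \<comment> \<open>Cut b steps off the outer segments next to the middle one and apply rectangularity there.\<close>
proof (cases d)
  case True
  with assms(1) obtain y y' where
    "(x, y) \<in> E ^^ (a - b + b)" "(y', y) \<in> E ^^ b" "(y', z) \<in> E ^^ (b + (c - b))"
    using assms(2,3) by auto
  then obtain p q where "(x, p) \<in> E ^^ (a - b)" "(p, y) \<in> E ^^ b" "(y', y) \<in> E ^^ b"
    "(y', q) \<in> E ^^ b" "(q, z) \<in> E ^^ (c - b)"
    by (auto simp: relpow_add)
  then have "(g x, g z) \<in> E ^^ (a - b) O E ^^ b O E ^^ (c - b)"
    by (blast intro: relpow_preserved rectangular)
  then show ?thesis using True assms(2,3) by (simp add: relpow_add[symmetric])
next
  case False
  with assms(1) obtain y y' where
    "(y, x) \<in> E ^^ (b + (a - b))" "(y, y') \<in> E ^^ b" "(z, y') \<in> E ^^ (c - b + b)"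
    using assms(2,3) by auto
  then obtain p q where "(p, x) \<in> E ^^ (a - b)" "(y, p) \<in> E ^^ b" "(y, y') \<in> E ^^ b"
    "(q, y') \<in> E ^^ b" "(z, q) \<in> E ^^ (c - b)"
    by (auto simp: relpow_add)
  then have "(g z, g x) \<in> E ^^ (c - b) O E ^^ b O E ^^ (a - b)"
    by (blast intro: relpow_preserved rectangular)
  then show ?thesis using False assms(2,3) by (simp add: relpow_add[symmetric] add.commute)
qed

lemma zigzag_shorten:
  assumes "2 \<le> length S" "(x, z) \<in> zigzag E S"
  obtains S' x' z'
  where "length S' < length S" "net_length S \<le> net_length S'" "(x', z') \<in> zigzag E S'"
  using assms(1)
proof (cases rule: segment_list_cases)
  case (merge A d a b C)
  have "zigzag E S = zigzag E (A @ [(d, a + b)] @ C)"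
    using merge by (simp add: segment_add[symmetric] O_assoc)
  moreover have "net_length S = net_length (A @ [(d, a + b)] @ C)"
    using merge by (cases d) (simp_all add: net_length_def)
  ultimately show thesis
    using assms(2) by (intro that[of "A @ [(d, a + b)] @ C" x z]) (simp_all add: merge)
next
  case (drop_head a C)
  then show thesis using that[of C] assms(2) by (auto simp: net_length_def)
next
  case (drop_last A a)
  then show thesis using that[of A] assms(2) by (auto simp: net_length_def)
next
  case (drop_head2 a b C)
  then show thesis using that[of C] assms(2) by (auto simp: net_length_def)
next
  case (drop_last2 A a b)
  then show thesis using that[of A] assms(2) by (auto simp: net_length_def)
next
  case (valley A d a b c C)
  then obtain y y' where "(x, y) \<in> zigzag E A" "(y, y') \<in> zigzag E [(d, a), (\<not> d, b), (d, c)]"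
    "(y', z) \<in> zigzag E C"
    using assms(2) by (simp only: zigzag_append relcomp.simps) blast
  then have "(g x, g y) \<in> zigzag E A" "(g y, g y') \<in> zigzag E [(d, a + c - b)]"
    "(g y', g z) \<in> zigzag E C"
    using zigzag_valley valley(2,3) zigzag_preserved by blast+
  then have "(g x, g z) \<in> zigzag E (A @ [(d, a + c - b)] @ C)"
    unfolding zigzag_append by (meson relcompI)
  moreover have "net_length S = net_length (A @ [(d, a + c - b)] @ C)"
    using valley by (cases d) (simp_all add: net_length_def)
  ultimately show thesis
    by (intro that[of "A @ [(d, a + c - b)] @ C" "g x" "g z"]) (simp_all add: valley(1))
qed

lemma zigzag_net_length_le:
  assumes walk_bound: "\<And>x y k. (x, y) \<in> E ^^ k \<Longrightarrow> k \<le> n"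
  shows "(x, z) \<in> zigzag E S \<Longrightarrow> net_length S \<le> int n"
proof (induction "length S" arbitrary: S x z rule: less_induct)
  case less
  show ?case
  proof (cases "2 \<le> length S")
    case True
    obtain S' x' z' where
      S': "length S' < length S" "net_length S \<le> net_length S'" "(x', z') \<in> zigzag E S'"
      using zigzag_shorten[OF True less.prems] .
    have "net_length S' \<le> int n" using less.hyps[OF S'(1) S'(3)] .
    with S'(2) show ?thesis by linarith
  next
    case False
    show ?thesis
    proof (cases S)
      case (Cons s S')
      with False have S: "S = [(fst s, snd s)]" by (cases S') auto
      show ?thesis
      proof (cases "fst s")
        case True
        with less.prems S have "(x, z) \<in> E ^^ snd s" by (simp add: zigzag_def)
        with True S show ?thesis using walk_bound by (simp add: net_length_def)
      qed (use S in \<open>simp add: net_length_def\<close>)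
    qed (simp add: net_length_def)
  qed
qed

end

section \<open>Directed paths as a pp power of P2\<close>

definition dipath :: "nat \<Rightarrow> nat digraph" where
  "dipath n = ({0..n}, {(i, Suc i) | i. i < n})"

lemma verts_dipath [simp]: "verts (dipath n) = {0..n}"
  and edges_dipath [simp]: "edges (dipath n) = {(i, Suc i) | i. i < n}"
  by (simp_all add: dipath_def verts_def edges_def)

lemma hom_dipath_of_zigzag_bound:
  assumes bound: "\<And>x z S. (x, z) \<in> zigzag (edges G) S \<Longrightarrow> net_length S \<le> int n"
  shows "\<exists>h. hom h G (dipath n)"
proof -
  define reach where
    "reach v k \<longleftrightarrow> (\<exists>x S. (x, v) \<in> zigzag (edges G) S \<and> net_length S = int k)" for v k
  define level where "level v = (GREATEST k. reach v k)" for v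
  have reach_0: "reach v 0" for v
    unfolding reach_def by (rule exI[of _ v], rule exI[of _ "[]"]) (simp add: net_length_def)
  have reach_le: "k \<le> n" if "reach v k" for v k
    using that bound unfolding reach_def by force
  have level: "reach v (level v)" "\<And>k. reach v k \<Longrightarrow> k \<le> level v" for v
    unfolding level_def using reach_0 reach_le by (metis GreatestI_nat, metis Greatest_le_nat)
  have level_edge: "level v = Suc (level u)" if uv: "(u, v) \<in> edges G" for u v
  proof -
    obtain x S where S: "(x, u) \<in> zigzag (edges G) S" "net_length S = int (level u)"
      using level(1)[of u] unfolding reach_def by blast
    with uv have "(x, v) \<in> zigzag (edges G) (S @ [(True, 1)])"
      "net_length (S @ [(True, 1)]) = int (Suc (level u))"
      by (auto simp: net_length_def)
    then have up: "Suc (level u) \<le> level v" using level(2) unfolding reach_def by blast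
    obtain x' S' where S': "(x', v) \<in> zigzag (edges G) S'" "net_length S' = int (level v)"
      using level(1)[of v] unfolding reach_def by blast
    with uv up have "(x', u) \<in> zigzag (edges G) (S' @ [(False, 1)])"
      "net_length (S' @ [(False, 1)]) = int (level v - 1)"
      by (auto simp: net_length_def)
    then have "level v - 1 \<le> level u" using level(2) unfolding reach_def by blast
    with up show ?thesis by linarith
  qed
  have level_le: "level v \<le> n" for v
    using reach_le level(1) by blast
  have "level u < n" if "(u, v) \<in> edges G" for u v
    using level_edge[OF that] level_le[of v] by simp
  then have "hom level G (dipath n)"
    unfolding hom_def using level_edge level_le by auto
  then show ?thesis by blast
qed

lemma hom_dipath_of_relpow:
  assumes G: "digraph G" and x: "x \<in> verts G" and xy: "(x, y) \<in> edges G ^^ n"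
  shows "\<exists>p. hom p (dipath n) G"
proof -
  obtain p where p: "p 0 = x" "\<And>i. i < n \<Longrightarrow> (p i, p (Suc i)) \<in> edges G"
    using xy unfolding relpow_fun_conv by blast
  have "p i \<in> verts G" if "i \<le> n" for i
  proof (cases i)
    case (Suc j)
    then show ?thesis using p(2)[of j] that G unfolding digraph_def by auto
  qed (use p(1) x in simp)
  then have "hom p (dipath n) G"
    unfolding hom_def using p(2) by auto
  then show ?thesis by blast
qed

text \<open>
  Vertex l of the directed path corresponds to the tuple 0^(n-l) 1^l. The formula says that an
  edge shifts a tuple one place to the left, reading a leading 0 and appending a 1. For n = 0 its
  only atom is Edge 0 0, which P2 does not satisfy, matching the edgeless path.
\<close>

definition path_formula :: "nat \<Rightarrow> atom list" where
  "path_formula n = Edge 0 (2 * n - 1) # map (\<lambda>i. Eq (n + i) (Suc i)) [0..<n - 1]"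

lemma pp_holds_path_formula_iff:
  assumes u: "u \<in> tuples {0, 1} n" and v: "v \<in> tuples {0, 1} n"
  shows "pp_holds P2 n (path_formula n) u v \<longleftrightarrow> 0 < n \<and> u ! 0 = 0 \<and> v = tl u @ [1]"
proof
  assume "pp_holds P2 n (path_formula n) u v"
  then obtain a where au: "\<And>i. i < n \<Longrightarrow> a i = u ! i \<and> a (n + i) = v ! i"
    and sat: "\<And>psi. psi \<in> set (path_formula n) \<Longrightarrow> atom_sat P2 a psi"
    unfolding pp_holds_def by blast
  have a: "a 0 = 0" "a (2 * n - 1) = 1"
    using sat[of "Edge 0 (2 * n - 1)"] by (auto simp: path_formula_def)
  then have n: "0 < n" by (cases n) auto
  have shift: "v ! i = u ! Suc i" if "i < n - 1" for i
    using sat[of "Eq (n + i) (Suc i)"] au[of i] au[of "Suc i"] that by (auto simp: path_formula_def)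
  have last: "v ! (n - 1) = 1" using au[of "n - 1"] a n by (simp add: mult_2)
  have "v = tl u @ [1]"
  proof (rule nth_equalityI)
    show "length v = length (tl u @ [1])" using u v n by (simp add: tuples_def)
    fix i assume "i < length v"
    then consider "i < n - 1" | "i = n - 1" using v by (fastforce simp: tuples_def)
    then show "v ! i = (tl u @ [1]) ! i"
      using shift last u by cases (auto simp: tuples_def nth_append nth_tl)
  qed
  with n a au[of 0] show "0 < n \<and> u ! 0 = 0 \<and> v = tl u @ [1]" by simp
next
  assume uv: "0 < n \<and> u ! 0 = 0 \<and> v = tl u @ [1]"
  define a where "a i = (if i < n then u ! i else if i < 2 * n then v ! (i - n) else 0)" for i
  have "a i \<in> {0, 1}" for i
    using tuples_nth[OF u, of i] tuples_nth[OF v, of "i - n"] by (simp add: a_def)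
  moreover have "atom_sat P2 a psi" if "psi \<in> set (path_formula n)" for psi
    using that u uv by (auto simp: path_formula_def a_def tuples_def nth_append nth_tl)
  ultimately show "pp_holds P2 n (path_formula n) u v"
    unfolding pp_holds_def by (intro exI[of _ a]) (auto simp: a_def)
qed

lemma hom_equiv_dipath_pp_power: "hom_equiv (dipath n) (pp_power P2 n (path_formula n))"
proof -
  define level_tuple where "level_tuple l = replicate (n - l) (0::nat) @ replicate l 1" for l
  have level_tuple: "level_tuple l \<in> tuples {0, 1} n" if "l \<le> n" for l
    using that by (auto simp: level_tuple_def tuples_def)
  have "pp_holds P2 n (path_formula n) (level_tuple l) (level_tuple (Suc l))" if "l < n" for l
    unfolding pp_holds_path_formula_iff[OF level_tuple[OF less_imp_le[OF that]]
        level_tuple[OF Suc_leI[OF that]]]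
    using that by (auto simp: level_tuple_def Suc_diff_Suc replicate_append_same nth_append)
  then have "hom level_tuple (dipath n) (pp_power P2 n (path_formula n))"
    unfolding hom_def using level_tuple by auto
  moreover have "hom sum_list (pp_power P2 n (path_formula n)) (dipath n)"
  proof -
    have sum_le: "sum_list u \<le> n" if "u \<in> tuples {0, 1} n" for u
    proof -
      have "set u \<subseteq> {0, 1} \<Longrightarrow> sum_list u \<le> length u" for u :: "nat list"
        by (induction u) auto
      with that show ?thesis unfolding tuples_def by force
    qed
    have "sum_list v = Suc (sum_list u)"
      if "u \<in> tuples {0, 1} n" "v \<in> tuples {0, 1} n" "pp_holds P2 n (path_formula n) u v" for u v
      using that by (cases u) (auto simp: pp_holds_path_formula_iff)
    with sum_le show ?thesis
      unfolding hom_def by fastforce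
  qed
  ultimately show ?thesis unfolding hom_equiv_def by blast
qed

theorem mainTheorem4:
  fixes G :: "'a digraph"
  assumes "digraph G"
    and "finite (verts G)"
    and "verts G \<noteq> {}"
    and "has_SigmaM_pol G"
    and "\<And>p. prime p \<Longrightarrow> has_cyclic_pol G p"
  shows "pp_le P2 G"
proof (cases "\<exists>x. (x, x) \<in> edges G")
  case True
  then show ?thesis using pp_le_of_loop[of P2, OF _ assms(1)] by auto
next
  case False
  then have acyclic: "\<And>x k. (x, x) \<in> edges G ^^ k \<Longrightarrow> k = 0"
    using loop_of_closed_walk[OF assms(1,5)] by blast
  obtain x y n where "x \<in> verts G" "(x, y) \<in> edges G ^^ n"
    and walk_bound: "\<And>u v k. (u, v) \<in> edges G ^^ k \<Longrightarrow> k \<le> n"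
    using longest_walk[OF assms(1-3)] acyclic by metis
  then have "\<exists>p. hom p (dipath n) G"
    using hom_dipath_of_relpow[OF assms(1)] by blast
  moreover obtain g where "rectangular_map (edges G) g"
    using SigmaM_pol_rectangular_map[OF assms(1,4)] by blast
  then have "net_length S \<le> int n" if "(u, v) \<in> zigzag (edges G) S" for u v S
    using walk_bound that by (rule rectangular_map.zigzag_net_length_le)
  then have "\<exists>h. hom h G (dipath n)"
    by (rule hom_dipath_of_zigzag_bound)
  ultimately have "hom_equiv G (dipath n)"
    unfolding hom_equiv_def by blast
  then show ?thesis
    unfolding pp_le_def using hom_equiv_trans hom_equiv_dipath_pp_power by blast
qed

end
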